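(* Every path-restricted ordered bipartite graph $G=(U,V,E)$ has at most $n\log n+O(n)$ edges, where $n=|U|+|V|$. Moreover the bound is tight up to constant factors: for infinitely many $n$ there exists a path-restricted ordered bipartite graph on $n$ vertices with $\Omega(n\log n)$ edges.
   Context: $\log$ denotes the binary logarithm. An ordered bipartite graph is $G=(U,V,E)$ where $U,V$ are disjoint finite sets, each carrying a strict total order (both written $<$), and $E\subseteq U\times V$. A path is a sequence of edges in which consecutive edges share a vertex. A path visiting the vertices of $U$ in the order $u_1,\dots,u_k$ and those of $V$ in the order $v_1,\dots,v_l$ is a forward path if either $u_1<\dots<u_k$ and $v_1<\dots<v_l$, or $u_1>\dots>u_k$ and $v_1>\dots>v_l$. For $x\le y$ in $U$ write $\langle x,y\rangle=\{u\in U: x\le u\le y\}$, and similarly in $V$. If $u_a<u_b$ are the smallest and largest $U$-vertices and $v_c<v_d$ the smallest and largest $V$-vertices of a forward path $P$, the range of $P$ is $\{\langle u_a,u_b\rangle,\langle v_c,v_d\rangle\}$. A vertex of $P$ is non-terminal if it is adjacent along $P$ to two vertices of $P$. An edge is a back edge to $P$ if either it is $(u_a,v_j)$ with $v_j\in\langle v_c,v_d\rangle$ and $v_j>v'$ for some non-terminal vertex $v'\in V$ of $P$, or it is $(u_i,v_c)$ with $u_i\in\langle u_a,u_b\rangle$ and $u_i>u'$ for some non-terminal vertex $u'\in U$ of $P$. $G$ is a path-restricted ordered bipartite graph (PRBG) if no forward path in $G$ has a back edge in $E$. *)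

theory Defs
  imports Complex_Main
begin

text \<open>Vertices of an ordered bipartite graph: U-vertices are natural numbers tagged
  Inl, V-vertices natural numbers tagged Inr (every finite strict total order is
  isomorphic to a finite set of naturals with their usual order).\<close>

type_synonym vtx = "nat + nat"

definition ordered_bigraph :: "nat set \<Rightarrow> nat set \<Rightarrow> (nat \<times> nat) set \<Rightarrow> bool" where
  "ordered_bigraph U V E \<longleftrightarrow> finite U \<and> finite V \<and> E \<subseteq> U \<times> V"

definition adj :: "(nat \<times> nat) set \<Rightarrow> vtx \<Rightarrow> vtx \<Rightarrow> bool" where
  "adj E x y \<longleftrightarrow>
     (\<exists>u v. x = Inl u \<and> y = Inr v \<and> (u, v) \<in> E) \<or>
     (\<exists>u v. x = Inr v \<and> y = Inl u \<and> (u, v) \<in> E)"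

definition is_path :: "(nat \<times> nat) set \<Rightarrow> vtx list \<Rightarrow> bool" where
  "is_path E ps \<longleftrightarrow> length ps \<ge> 2 \<and> (\<forall>i. i + 1 < length ps \<longrightarrow> adj E (ps ! i) (ps ! (i + 1)))"

definition U_seq :: "vtx list \<Rightarrow> nat list" where
  "U_seq ps = [u. Inl u \<leftarrow> ps]"

definition V_seq :: "vtx list \<Rightarrow> nat list" where
  "V_seq ps = [v. Inr v \<leftarrow> ps]"

definition forward_path :: "(nat \<times> nat) set \<Rightarrow> vtx list \<Rightarrow> bool" where
  "forward_path E ps \<longleftrightarrow> is_path E ps \<and>
     ((sorted_wrt (<) (U_seq ps) \<and> sorted_wrt (<) (V_seq ps)) \<or>
      (sorted_wrt (>) (U_seq ps) \<and> sorted_wrt (>) (V_seq ps)))"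

definition nonterm_U :: "vtx list \<Rightarrow> nat set" where
  "nonterm_U ps = {u. \<exists>i. 0 < i \<and> i + 1 < length ps \<and> ps ! i = Inl u}"

definition nonterm_V :: "vtx list \<Rightarrow> nat set" where
  "nonterm_V ps = {v. \<exists>i. 0 < i \<and> i + 1 < length ps \<and> ps ! i = Inr v}"

definition back_edge :: "vtx list \<Rightarrow> nat \<times> nat \<Rightarrow> bool" where
  "back_edge ps e \<longleftrightarrow>
     (let ua = Min (set (U_seq ps)); ub = Max (set (U_seq ps));
          vc = Min (set (V_seq ps)); vd = Max (set (V_seq ps)) in
      (\<exists>vj. e = (ua, vj) \<and> vc \<le> vj \<and> vj \<le> vd \<and> (\<exists>v' \<in> nonterm_V ps. vj > v')) \<or>
      (\<exists>ui. e = (ui, vc) \<and> ua \<le> ui \<and> ui \<le> ub \<and> (\<exists>u' \<in> nonterm_U ps. ui > u')))"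

definition PRBG :: "nat set \<Rightarrow> nat set \<Rightarrow> (nat \<times> nat) set \<Rightarrow> bool" where
  "PRBG U V E \<longleftrightarrow> ordered_bigraph U V E \<and>
     (\<forall>ps. forward_path E ps \<longrightarrow> \<not> (\<exists>e \<in> E. back_edge ps e))"

end

theory Submission
  imports Defs "HOL-Library.Log_Nat"
begin

text \<open>Upper bound: in a PRBG the forward path \<open>u1 v1 u2 v2\<close> (\<open>u1 < u2\<close>, \<open>v1 < v2\<close>) admits no
  back edge \<open>(u1, w)\<close> with \<open>v1 < w \<le> v2\<close>. Split the columns (V-vertices) into a lower and an
  upper half. Apart from the topmost one in each row, the lower-half edges whose row (U-vertex)
  also meets the upper half lie in pairwise distinct columns, for two of them in one column would
  form this forbidden configuration. Induction on the number of columns therefore gives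
  \<open>|E| \<le> (k + 1) |U| + k 2^(k-1)\<close> when there are at most \<open>2^k\<close> columns.

  Lower bound: the antidiagonals \<open>u + v = 2^k - 1 - 2^j\<close> of the square \<open>{0..<2^k}\<^sup>2\<close> contain
  at least \<open>k 2^(k-1)\<close> points. A back edge to a forward path forces four edges
  \<open>(u1, v1), (u2, v1), (u1, w), (z, t)\<close> with \<open>u1 < u2 \<le> z\<close> and \<open>v1 < w \<le> t\<close> (or the transposed
  configuration), and no four points of these antidiagonals are placed like that.\<close>

section \<open>Forward paths and back edges\<close>

lemma U_seq_simps [simp]:
  "U_seq [] = []" "U_seq (Inl u # ps) = u # U_seq ps" "U_seq (Inr v # ps) = U_seq ps"
  by (simp_all add: U_seq_def)

lemma V_seq_simps [simp]:
  "V_seq [] = []" "V_seq (Inl u # ps) = V_seq ps" "V_seq (Inr v # ps) = v # V_seq ps"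
  by (simp_all add: V_seq_def)

lemma U_seq_append [simp]: "U_seq (ps @ qs) = U_seq ps @ U_seq qs"
  by (simp add: U_seq_def)

lemma U_seq_rev [simp]: "U_seq (rev ps) = rev (U_seq ps)"
  by (induction ps) (auto simp: U_seq_def split: sum.split)

lemma V_seq_rev [simp]: "V_seq (rev ps) = rev (V_seq ps)"
  by (induction ps) (auto simp: V_seq_def split: sum.split)

lemma set_U_seq: "set (U_seq ps) = {u. Inl u \<in> set ps}"
  by (auto simp: U_seq_def split: sum.splits)

lemma set_V_seq: "set (V_seq ps) = {v. Inr v \<in> set ps}"
  by (auto simp: V_seq_def split: sum.splits)

definition flip_side :: "vtx \<Rightarrow> vtx" where
  "flip_side = case_sum Inr Inl"

lemma flip_side_simps [simp]: "flip_side (Inl u) = Inr u" "flip_side (Inr v) = Inl v"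
  by (simp_all add: flip_side_def)

lemma U_seq_map_flip_side [simp]: "U_seq (map flip_side ps) = V_seq ps"
  by (induction ps) (auto simp: U_seq_def V_seq_def flip_side_def split: sum.split)

lemma V_seq_map_flip_side [simp]: "V_seq (map flip_side ps) = U_seq ps"
  by (induction ps) (auto simp: U_seq_def V_seq_def flip_side_def split: sum.split)

lemma adj_converse_flip_side [simp]: "adj (E\<inverse>) (flip_side x) (flip_side y) = adj E x y"
  by (cases x; cases y) (auto simp: adj_def)

lemma is_path_map_flip_side: "is_path E ps \<Longrightarrow> is_path (E\<inverse>) (map flip_side ps)"
  by (simp add: is_path_def)

lemma nonterm_V_map_flip_side [simp]: "nonterm_V (map flip_side ps) = nonterm_U ps"
proof -
  have "map flip_side ps ! i = Inr u \<longleftrightarrow> ps ! i = Inl u" if "i < length ps" for i u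
    using that by (cases "ps ! i") auto
  then show ?thesis
    unfolding nonterm_V_def nonterm_U_def by (metis (no_types, opaque_lifting) add_lessD1 length_map)
qed

lemma adj_commute: "adj E x y = adj E y x"
  by (auto simp: adj_def)

lemma is_path_rev:
  assumes "is_path E ps"
  shows "is_path E (rev ps)"
  unfolding is_path_def
proof (intro conjI allI impI)
  show "2 \<le> length (rev ps)"
    using assms by (simp add: is_path_def)
  fix i
  assume i: "i + 1 < length (rev ps)"
  then have "adj E (ps ! (length ps - Suc (i + 1))) (ps ! (length ps - Suc (i + 1) + 1))"
    using assms unfolding is_path_def by simp
  moreover have "length ps - Suc (i + 1) + 1 = length ps - Suc i"
    using i by simp
  ultimately show "adj E (rev ps ! i) (rev ps ! (i + 1))"
    using i by (simp add: rev_nth) (metis adj_commute)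
qed

lemma nonterm_V_rev [simp]: "nonterm_V (rev ps) = nonterm_V ps"
proof -
  have "v \<in> nonterm_V (rev qs)" if v: "v \<in> nonterm_V qs" for v qs
  proof -
    obtain i where i: "0 < i" "i + 1 < length qs" "qs ! i = Inr v"
      using v unfolding nonterm_V_def by blast
    have "rev qs ! (length qs - 1 - i) = Inr v"
      using i by (simp add: rev_nth Suc_diff_Suc)
    moreover have "0 < length qs - 1 - i" "length qs - 1 - i + 1 < length (rev qs)"
      using i by auto
    ultimately show ?thesis
      unfolding nonterm_V_def by (intro CollectI exI[of _ "length qs - 1 - i"] conjI)
  qed
  from this[of _ ps] this[of _ "rev ps"] show ?thesis by auto
qed

lemma nonterm_U_rev [simp]: "nonterm_U (rev ps) = nonterm_U ps"
  using nonterm_V_rev[of "map flip_side ps"] by (simp add: rev_map)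

lemma back_edge_rev [simp]: "back_edge (rev ps) e = back_edge ps e"
  by (simp add: back_edge_def)

lemma sorted_wrt_U_seq_nth:
  assumes "sorted_wrt R (U_seq ps)" "i < j" "j < length ps" "ps ! i = Inl a" "ps ! j = Inl b"
  shows "R a b"
proof -
  have "Inl a \<in> set (take j ps)"
    using assms(2-4) by (metis length_take min.absorb4 nth_mem nth_take)
  moreover have "Inl b \<in> set (drop j ps)"
    using assms(3,5) by (metis Cons_nth_drop_Suc list.set_intros(1))
  moreover have "sorted_wrt R (U_seq (take j ps) @ U_seq (drop j ps))"
    using assms(1) by (metis U_seq_append append_take_drop_id)
  ultimately show ?thesis
    by (simp add: sorted_wrt_append set_U_seq)
qed

lemma sorted_U_seq_index_less_iff:
  assumes "sorted_wrt (<) (U_seq ps)" "i < length ps" "j < length ps"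
    and "ps ! i = Inl a" "ps ! j = Inl b"
  shows "i < j \<longleftrightarrow> a < b"
  using sorted_wrt_U_seq_nth[OF assms(1) _ assms(3-5)]
    sorted_wrt_U_seq_nth[OF assms(1) _ assms(2,5,4)] assms(4,5) by (cases i j rule: linorder_cases) auto

lemma sorted_V_seq_index_less_iff:
  assumes "sorted_wrt (<) (V_seq ps)" "i < length ps" "j < length ps"
    and "ps ! i = Inr a" "ps ! j = Inr b"
  shows "i < j \<longleftrightarrow> a < b"
  using sorted_U_seq_index_less_iff[of "map flip_side ps" i j a b] assms by simp

lemma is_path_nth_edge:
  assumes "is_path E ps" "i + 1 < length ps"
  shows "(\<exists>u v. ps ! i = Inl u \<and> ps ! (i + 1) = Inr v \<and> (u, v) \<in> E) \<or>
         (\<exists>u v. ps ! i = Inr v \<and> ps ! (i + 1) = Inl u \<and> (u, v) \<in> E)"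
  using assms by (auto simp: is_path_def adj_def)

text \<open>The edges left behind by a back edge \<open>(u1, w)\<close> to an increasing forward path from its
  minimal U-vertex \<open>u1\<close>: the two path edges \<open>(u1, v1), (u2, v1)\<close> following \<open>u1\<close>, and a path
  edge \<open>(z, t)\<close> at a V-vertex \<open>t \<ge> w\<close>. A back edge of the other kind leaves this pattern in
  the converse relation.\<close>

definition back_pattern :: "('a::linorder \<times> 'b::linorder) set \<Rightarrow> bool" where
  "back_pattern E \<longleftrightarrow> (\<exists>u1 u2 z v1 w t.
     (u1, v1) \<in> E \<and> (u2, v1) \<in> E \<and> (u1, w) \<in> E \<and> (z, t) \<in> E \<and>
     u1 < u2 \<and> u2 \<le> z \<and> v1 < w \<and> w \<le> t)"

lemma back_pattern_of_increasing_path: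
  assumes P: "is_path E ps"
    and SU: "sorted_wrt (<) (U_seq ps)" and SV: "sorted_wrt (<) (V_seq ps)"
    and ua: "ua \<in> set (U_seq ps)" "\<forall>u \<in> set (U_seq ps). ua \<le> u"
    and vd: "vd \<in> set (V_seq ps)"
    and w: "(ua, w) \<in> E" "w \<le> vd"
    and v': "v' \<in> nonterm_V ps" "v' < w"
  shows "back_pattern E"
proof -
  obtain i where i: "0 < i" "i + 1 < length ps" "ps ! i = Inr v'"
    using v'(1) unfolding nonterm_V_def by blast
  obtain a where a: "a < length ps" "ps ! a = Inl ua"
    using ua(1) by (auto simp: set_U_seq in_set_conv_nth)
  obtain p where p: "p < length ps" "ps ! p = Inr vd"
    using vd by (auto simp: set_V_seq in_set_conv_nth)
  obtain x where x: "ps ! (i - 1) = Inl x"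
    using is_path_nth_edge[OF P, of "i - 1"] i by auto
  have "ua \<le> x"
    using ua(2) x i by (metis less_imp_diff_less mem_Collect_eq nth_mem set_U_seq add_lessD1)
  then have ai: "a < i"
    using sorted_U_seq_index_less_iff[OF SU _ a(1) x a(2)] i by linarith
  obtain v1 where v1: "ps ! (a + 1) = Inr v1" "(ua, v1) \<in> E"
    using is_path_nth_edge[OF P, of a] a(2) ai i by auto
  have "v1 \<le> v'"
    using sorted_V_seq_index_less_iff[OF SV _ _ i(3) v1(1)] ai i by linarith
  obtain u2 where u2: "ps ! (a + 2) = Inl u2" "(u2, v1) \<in> E"
    using is_path_nth_edge[OF P, of "a + 1"] v1(1) ai i by auto
  have "ua < u2"
    using sorted_U_seq_index_less_iff[OF SU a(1) _ a(2) u2(1)] ai i by simp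
  have "a + 1 < p"
    using sorted_V_seq_index_less_iff[OF SV _ p(1) v1(1) p(2)] ai i \<open>v1 \<le> v'\<close> v'(2) w(2)
    by simp
  moreover have "p \<noteq> a + 2"
    using p(2) u2(1) by auto
  ultimately obtain z where z: "ps ! (p - 1) = Inl z" "(z, vd) \<in> E"
    using is_path_nth_edge[OF P, of "p - 1"] p by auto
  have "p - 1 < length ps" "a + 2 < length ps"
    using p(1) ai i by auto
  then have "u2 \<le> z"
    using sorted_U_seq_index_less_iff[OF SU _ _ z(1) u2(1)] \<open>a + 1 < p\<close> \<open>p \<noteq> a + 2\<close>
    by linarith
  show ?thesis
    unfolding back_pattern_def
    using v1(2) u2(2) w z(2) \<open>ua < u2\<close> \<open>u2 \<le> z\<close> \<open>v1 \<le> v'\<close> v'(2) by fastforce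
qed

lemma is_path_sides_nonempty:
  assumes "is_path E ps"
  shows "set (U_seq ps) \<noteq> {}" "set (V_seq ps) \<noteq> {}"
proof -
  have "0 + 1 < length ps"
    using assms by (simp add: is_path_def)
  then show "set (U_seq ps) \<noteq> {}" "set (V_seq ps) \<noteq> {}"
    using is_path_nth_edge[OF assms, of 0] unfolding set_U_seq set_V_seq
    by (metis add_lessD1 empty_Collect_eq nth_mem)+
qed

lemma back_pattern_of_back_edge:
  assumes P: "is_path E ps"
    and SU: "sorted_wrt (<) (U_seq ps)" and SV: "sorted_wrt (<) (V_seq ps)"
    and "back_edge ps e" "e \<in> E"
  shows "back_pattern E \<or> back_pattern (E\<inverse>)"
  using \<open>back_edge ps e\<close> unfolding back_edge_def Let_def
proof (elim disjE exE bexE conjE)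
  fix vj v'
  assume "e = (Min (set (U_seq ps)), vj)" "vj \<le> Max (set (V_seq ps))" "v' \<in> nonterm_V ps" "v' < vj"
  then have "back_pattern E"
    using back_pattern_of_increasing_path[OF P SU SV,
        of "Min (set (U_seq ps))" "Max (set (V_seq ps))" vj v']
      is_path_sides_nonempty[OF P] \<open>e \<in> E\<close> by simp
  then show ?thesis ..
next
  fix ui u'
  assume "e = (ui, Min (set (V_seq ps)))" "ui \<le> Max (set (U_seq ps))" "u' \<in> nonterm_U ps" "u' < ui"
  then have "back_pattern (E\<inverse>)"
    using back_pattern_of_increasing_path[OF is_path_map_flip_side[OF P],
        of "Min (set (V_seq ps))" "Max (set (U_seq ps))" ui u']
      SU SV is_path_sides_nonempty[OF P] \<open>e \<in> E\<close> by simp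
  then show ?thesis ..
qed

lemma PRBG_if_no_back_pattern:
  assumes "ordered_bigraph U V E" "\<not> back_pattern E" "\<not> back_pattern (E\<inverse>)"
  shows "PRBG U V E"
  unfolding PRBG_def
proof (intro conjI allI impI notI)
  show "ordered_bigraph U V E" by fact
  fix ps
  assume "forward_path E ps" "\<exists>e \<in> E. back_edge ps e"
  then obtain e where P: "is_path E ps" and e: "e \<in> E" "back_edge ps e"
    and "sorted_wrt (<) (U_seq ps) \<and> sorted_wrt (<) (V_seq ps) \<or>
         sorted_wrt (<) (U_seq (rev ps)) \<and> sorted_wrt (<) (V_seq (rev ps))"
    by (auto simp: forward_path_def sorted_wrt_rev)
  then show False
    using back_pattern_of_back_edge[OF P _ _ e(2,1)]
      back_pattern_of_back_edge[OF is_path_rev[OF P] _ _ _ e(1)] e(2) assms(2,3) by auto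
qed

section \<open>Upper bound\<close>

text \<open>Forbids the forward path \<open>u1 v1 u2 v2\<close> together with the back edge \<open>(u1, w)\<close>.\<close>

definition zigzag_free :: "('a::linorder \<times> 'b::linorder) set \<Rightarrow> bool" where
  "zigzag_free E \<longleftrightarrow> \<not> (\<exists>u1 u2 v1 w v2.
     (u1, v1) \<in> E \<and> (u2, v1) \<in> E \<and> (u2, v2) \<in> E \<and> (u1, w) \<in> E \<and>
     u1 < u2 \<and> v1 < w \<and> w \<le> v2)"

lemma zigzag_free_subset: "zigzag_free E \<Longrightarrow> F \<subseteq> E \<Longrightarrow> zigzag_free F"
  unfolding zigzag_free_def by blast

lemma PRBG_zigzag_free:
  assumes "PRBG U V E"
  shows "zigzag_free E"
  unfolding zigzag_free_def
proof (intro notI, elim exE conjE)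
  fix u1 u2 v1 w v2
  assume E: "(u1, v1) \<in> E" "(u2, v1) \<in> E" "(u2, v2) \<in> E" "(u1, w) \<in> E"
    and "u1 < u2" "v1 < w" "w \<le> v2"
  define ps where "ps = [Inl u1, Inr v1, Inl u2, Inr v2]"
  have "is_path E ps"
    unfolding is_path_def
  proof (intro conjI allI impI)
    fix i
    assume "i + 1 < length ps"
    then have "i = 0 \<or> i = 1 \<or> i = 2"
      by (auto simp: ps_def)
    then show "adj E (ps ! i) (ps ! (i + 1))"
      using E by (auto simp: ps_def adj_def)
  qed (simp add: ps_def)
  then have "forward_path E ps"
    using \<open>u1 < u2\<close> \<open>v1 < w\<close> \<open>w \<le> v2\<close> by (simp add: forward_path_def ps_def)
  moreover have "v1 \<in> nonterm_V ps"
    unfolding nonterm_V_def by (intro CollectI exI[of _ 1]) (simp add: ps_def)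
  then have "back_edge ps (u1, w)"
    using \<open>u1 < u2\<close> \<open>v1 < w\<close> \<open>w \<le> v2\<close> by (auto simp: back_edge_def ps_def)
  ultimately show False
    using assms E(4) unfolding PRBG_def by blast
qed

text \<open>Of the edges in \<open>L\<close> whose row also meets \<open>R\<close>, the topmost one of each row is counted by
  its row; any two others in the same column would form a zigzag with an edge of \<open>R\<close>.\<close>

lemma card_shared_rows_le:
  assumes zf: "zigzag_free (L \<union> R)" and fin: "finite L" "finite R" "finite S"
    and "snd ` L \<subseteq> S" and below: "\<forall>x \<in> L. \<forall>y \<in> R. snd x \<le> snd y"
  shows "card {x \<in> L. fst x \<in> fst ` R} \<le> card (fst ` R) + card S"
proof -
  define B where "B = {x \<in> L. fst x \<in> fst ` R}"
  define B1 where "B1 = {x \<in> B. \<forall>y \<in> L. fst y = fst x \<longrightarrow> snd y \<le> snd x}"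
  have "B = B1 \<union> (B - B1)"
    by (auto simp: B1_def)
  then have "card B \<le> card B1 + card (B - B1)"
    by (metis card_Un_le)
  moreover have "card B1 \<le> card (fst ` R)"
  proof (rule card_inj_on_le)
    show "inj_on fst B1"
      by (rule inj_onI) (auto simp: B1_def B_def prod_eq_iff intro: order.antisym)
  qed (use fin in \<open>auto simp: B1_def B_def\<close>)
  moreover have "card (B - B1) \<le> card S"
  proof (rule card_inj_on_le)
    have no_lower: False if x: "x \<in> B - B1" and y: "y \<in> B" "snd x = snd y" "fst x < fst y" for x y
    proof -
      obtain x' where x': "x' \<in> L" "fst x' = fst x" "snd x < snd x'"
        using x by (auto simp: B1_def B_def not_le)
      obtain z where z: "z \<in> R" "fst z = fst y"
        using y by (auto simp: B_def)
      have "snd x' \<le> snd z"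
        using below x'(1) z(1) by blast
      moreover have "(fst x, snd x) \<in> L \<union> R"
        using x by (simp add: B_def)
      moreover have "(fst y, snd x) \<in> L \<union> R"
        using y by (simp add: B_def)
      moreover have "(fst y, snd z) \<in> L \<union> R" "(fst x, snd x') \<in> L \<union> R"
        using z(1) x'(1) by (simp_all add: z(2)[symmetric] x'(2)[symmetric])
      ultimately show False
        using zf x'(3) y(3) unfolding zigzag_free_def by blast
    qed
    show "inj_on snd (B - B1)"
    proof (rule inj_onI)
      fix x y
      assume "x \<in> B - B1" "y \<in> B - B1" "snd x = snd y"
      then show "x = y"
        using no_lower[of x y] no_lower[of y x]
        by (cases "fst x" "fst y" rule: linorder_cases) (auto simp: prod_eq_iff)
    qed
  qed (use \<open>snd ` L \<subseteq> S\<close> fin in \<open>auto simp: B_def\<close>)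
  ultimately show ?thesis
    unfolding B_def by linarith
qed

lemma card_zigzag_free_interval:
  fixes P :: "('a::linorder \<times> nat) set"
  assumes "finite P" "zigzag_free P" "snd ` P \<subseteq> {s..<s + 2 ^ k}"
  shows "2 * card P \<le> 2 * (k + 1) * card (fst ` P) + k * 2 ^ k"
  using assms
proof (induction k arbitrary: s P)
  case 0
  then have "inj_on fst P"
    by (intro inj_onI) (auto simp: prod_eq_iff)
  then show ?case
    by (simp add: card_image)
next
  case (Suc k)
  define m where "m = s + 2 ^ k"
  define L where "L = {x \<in> P. snd x < m}"
  define R where "R = {x \<in> P. m \<le> snd x}"
  define A where "A = {x \<in> L. fst x \<notin> fst ` R}"
  define B where "B = {x \<in> L. fst x \<in> fst ` R}"
  have fin: "finite L" "finite R" "finite A" "finite B"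
    using Suc.prems(1) by (simp_all add: L_def R_def A_def B_def)
  have "card P = card A + card B + card R"
  proof -
    have "P = (A \<union> B) \<union> R" "A \<inter> B = {}" "(A \<union> B) \<inter> R = {}"
      by (auto simp: A_def B_def L_def R_def)
    then show ?thesis
      using fin by (simp add: card_Un_disjoint)
  qed
  moreover have "2 * card A \<le> 2 * (k + 1) * card (fst ` A) + k * 2 ^ k"
  proof (rule Suc.IH)
    show "zigzag_free A"
      using Suc.prems(2) by (rule zigzag_free_subset) (auto simp: A_def L_def)
  qed (use fin Suc.prems(3) in \<open>auto simp: A_def L_def m_def\<close>)
  moreover have "2 * card R \<le> 2 * (k + 1) * card (fst ` R) + k * 2 ^ k"
  proof (rule Suc.IH)
    show "zigzag_free R"
      using Suc.prems(2) by (rule zigzag_free_subset) (auto simp: R_def)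
    show "snd ` R \<subseteq> {m..<m + 2 ^ k}"
      using Suc.prems(3) by (auto simp: R_def m_def)
  qed (use fin in auto)
  moreover have "card B \<le> card (fst ` R) + card {s..<m}"
    unfolding B_def
  proof (rule card_shared_rows_le)
    show "zigzag_free (L \<union> R)"
      using Suc.prems(2) by (rule zigzag_free_subset) (auto simp: L_def R_def)
  qed (use fin Suc.prems(3) in \<open>auto simp: L_def R_def\<close>)
  moreover have fst_AR: "card (fst ` A) + card (fst ` R) \<le> card (fst ` P)"
  proof -
    have "fst ` A \<inter> fst ` R = {}" "fst ` A \<union> fst ` R \<subseteq> fst ` P"
      by (auto simp: A_def L_def R_def)
    then show ?thesis
      using Suc.prems(1) fin by (metis card_Un_disjoint card_mono finite_imageI)
  qed
  then have "(k + 1) * (card (fst ` A) + card (fst ` R)) \<le> (k + 1) * card (fst ` P)"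
    by (rule mult_le_mono2)
  ultimately show ?case
    using fst_AR by (simp add: m_def algebra_simps)
qed

lemma zigzag_free_image_apsnd:
  assumes mono: "strict_mono_on V f" and "snd ` E \<subseteq> V" and "zigzag_free E"
  shows "zigzag_free (apsnd f ` E)"
  unfolding zigzag_free_def
proof (intro notI, elim exE conjE)
  fix u1 u2 v1 w v2
  assume "(u1, v1) \<in> apsnd f ` E" "(u2, v1) \<in> apsnd f ` E" "(u2, v2) \<in> apsnd f ` E"
    "(u1, w) \<in> apsnd f ` E" and "u1 < u2" "v1 < w" "w \<le> v2"
  then obtain a1 a2 a3 a4 where E: "(u1, a1) \<in> E" "(u2, a2) \<in> E" "(u2, a3) \<in> E" "(u1, a4) \<in> E"
    and f: "f a1 = v1" "f a2 = v1" "f a3 = v2" "f a4 = w"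
    by (auto simp: apsnd_def map_prod_def split: prod.splits)
  have V: "a1 \<in> V" "a2 \<in> V" "a3 \<in> V" "a4 \<in> V"
    using E \<open>snd ` E \<subseteq> V\<close> by force+
  have "a1 = a2" "a1 < a4" "a4 \<le> a3"
    using f \<open>v1 < w\<close> \<open>w \<le> v2\<close> strict_mono_on_eq[OF mono] strict_mono_on_less[OF mono]
      strict_mono_on_less_eq[OF mono] V by auto
  then show False
    using \<open>zigzag_free E\<close> E \<open>u1 < u2\<close> unfolding zigzag_free_def by blast
qed

lemma strict_mono_on_rank:
  fixes V :: "'a::order set"
  assumes "finite V"
  shows "strict_mono_on V (\<lambda>v. card {x \<in> V. x < v})"
proof (rule strict_mono_onI)
  fix v v'
  assume "v \<in> V" "v' \<in> V" "v < v'"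
  then have "{x \<in> V. x < v} \<subset> {x \<in> V. x < v'}"
    by auto
  then show "card {x \<in> V. x < v} < card {x \<in> V. x < v'}"
    using assms by (simp add: psubset_card_mono)
qed

lemma rank_less_card:
  fixes V :: "'a::order set"
  assumes "finite V" "v \<in> V"
  shows "card {x \<in> V. x < v} < card V"
proof (rule psubset_card_mono)
  show "{x \<in> V. x < v} \<subset> V"
    using assms(2) by blast
qed (fact assms(1))

lemma card_zigzag_free_le:
  assumes "finite U" "finite V" "E \<subseteq> U \<times> V" "zigzag_free E" "card V \<le> 2 ^ k"
  shows "2 * card E \<le> 2 * (k + 1) * card U + k * 2 ^ k"
proof -
  define rank where "rank v = card {x \<in> V. x < v}" for v
  have mono: "strict_mono_on V rank"
    unfolding rank_def using assms(2) by (rule strict_mono_on_rank)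
  have "inj_on (apsnd rank) E"
  proof (rule inj_onI, clarify)
    fix a b c d
    assume "(a, b) \<in> E" "(c, d) \<in> E" "apsnd rank (a, b) = apsnd rank (c, d)"
    then show "a = c \<and> b = d"
      using strict_mono_on_eq[OF mono, of b d] assms(3) by auto
  qed
  then have "card E = card (apsnd rank ` E)"
    by (simp add: card_image)
  also have "2 * \<dots> \<le> 2 * (k + 1) * card (fst ` apsnd rank ` E) + k * 2 ^ k"
  proof (rule card_zigzag_free_interval)
    show "finite (apsnd rank ` E)"
      using assms(1-3) by (meson finite_SigmaI finite_imageI finite_subset)
    show "zigzag_free (apsnd rank ` E)"
      using assms(3) by (intro zigzag_free_image_apsnd[OF mono _ assms(4)]) auto
    have "rank ` snd ` E \<subseteq> {0..<card V}"
      using assms(3) rank_less_card[OF assms(2)] by (auto simp: rank_def)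
    then show "snd ` apsnd rank ` E \<subseteq> {0..<0 + 2 ^ k}"
      using assms(5) by (auto simp: image_image)
  qed
  finally have "2 * card E \<le> 2 * (k + 1) * card (fst ` apsnd rank ` E) + k * 2 ^ k" .
  moreover have "card (fst ` apsnd rank ` E) \<le> card U"
    using assms(1,3) by (auto simp: image_image intro!: card_mono)
  ultimately show ?thesis
    by (meson add_le_mono1 le_trans mult_le_mono2)
qed

lemma PRBG_card_le:
  assumes "PRBG U V E"
  shows "real (card E) \<le> real (card U + card V) * log 2 (real (card U + card V))
                           + 2 * real (card U + card V)"
proof -
  have fin: "finite U" "finite V" and "E \<subseteq> U \<times> V"
    using assms by (auto simp: PRBG_def ordered_bigraph_def)
  define n where "n = card U + card V"
  show ?thesis
  proof (cases "V = {}")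
    case True
    then have "E = {}"
      using \<open>E \<subseteq> U \<times> V\<close> by auto
    moreover have "0 \<le> real n * log 2 (real n)"
      by (cases "n = 0") auto
    ultimately show ?thesis
      by (simp add: n_def)
  next
    case False
    define k where "k = ceillog2 (card V)"
    have "0 < card V"
      using False fin(2) by (simp add: card_gt_0_iff)
    have "2 * card E \<le> 2 * (k + 1) * card U + k * 2 ^ k"
      using card_zigzag_free_le[OF fin \<open>E \<subseteq> U \<times> V\<close> PRBG_zigzag_free[OF assms]]
      by (simp add: k_def le_two_power_ceillog2)
    moreover have "k * 2 ^ k \<le> k * (2 * card V)"
      using two_power_ceillog2_gt[OF \<open>0 < card V\<close>] by (simp add: k_def)
    ultimately have "card E \<le> (k + 1) * card U + k * card V"
      by linarith
    then have "real (card E) \<le> (real k + 1) * real (card U) + real k * real (card V)"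
      by (metis of_nat_add of_nat_le_iff of_nat_mult of_nat_1)
    moreover have "real k \<le> log 2 (real n) + 1"
    proof -
      have "real k < log 2 (real (card V)) + 1"
        using ceillog2_less_log[OF \<open>0 < card V\<close>] by (simp add: k_def)
      also have "\<dots> \<le> log 2 (real n) + 1"
        using \<open>0 < card V\<close> by (simp add: n_def)
      finally show ?thesis
        by simp
    qed
    ultimately have "real (card E) \<le>
        (log 2 (real n) + 2) * real (card U) + (log 2 (real n) + 2) * real (card V)"
      by (smt (verit) mult_right_mono of_nat_0_le_iff)
    then show ?thesis
      by (simp add: n_def algebra_simps)
  qed
qed

section \<open>Lower bound\<close>

lemma pow2_add_pow2_le:
  assumes "j < p" "l < p"
  shows "(2::nat) ^ j + 2 ^ l \<le> 2 ^ p"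
proof -
  have "(2::nat) ^ j \<le> 2 ^ (p - 1)" "(2::nat) ^ l \<le> 2 ^ (p - 1)"
    using assms by (simp_all add: power_increasing)
  moreover have "(2::nat) ^ p = 2 ^ (p - 1) + 2 ^ (p - 1)"
    using assms by (metis Suc_pred' mult_2 not_less_zero power_Suc gr0I)
  ultimately show ?thesis
    by linarith
qed

definition antidiagonals :: "nat \<Rightarrow> (nat \<times> nat) set" where
  "antidiagonals k = {(u, v). \<exists>j. u + v + 2 ^ j + 1 = 2 ^ k}"

lemma antidiagonals_subset: "antidiagonals k \<subseteq> {..<2 ^ k} \<times> {..<2 ^ k}"
  by (auto simp: antidiagonals_def)

lemma converse_antidiagonals [simp]: "(antidiagonals k)\<inverse> = antidiagonals k"
  by (auto simp: antidiagonals_def add.commute add.left_commute)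

text \<open>Adding up the four antidiagonal equations gives \<open>2^p + 2^r \<le> 2^q + 2^l\<close> with
  \<open>q, l < p\<close>, which is impossible.\<close>

lemma not_back_pattern_antidiagonals: "\<not> back_pattern (antidiagonals k)"
proof
  assume "back_pattern (antidiagonals k)"
  then obtain u1 u2 z v1 w t p q l r where
    eqs: "u1 + v1 + 2 ^ p + 1 = 2 ^ k" "u2 + v1 + 2 ^ q + 1 = 2 ^ k"
         "u1 + w + 2 ^ l + 1 = 2 ^ k" "z + t + 2 ^ r + 1 = (2::nat) ^ k"
    and "u1 < u2" "u2 \<le> z" "v1 < w" "w \<le> t"
    unfolding back_pattern_def antidiagonals_def by blast
  then have "(2::nat) ^ q < 2 ^ p" "(2::nat) ^ l < 2 ^ p"
    by linarith+
  then have "(2::nat) ^ q + 2 ^ l \<le> 2 ^ p"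
    by (simp add: pow2_add_pow2_le)
  moreover have "(2::nat) ^ p + 2 ^ r \<le> 2 ^ q + 2 ^ l"
    using eqs \<open>u2 \<le> z\<close> \<open>w \<le> t\<close> by linarith
  moreover have "(0::nat) < 2 ^ r"
    by simp
  ultimately show False
    by linarith
qed

lemma PRBG_antidiagonals: "PRBG {..<2 ^ k} {..<2 ^ k} (antidiagonals k)"
  using antidiagonals_subset not_back_pattern_antidiagonals
  by (auto simp: ordered_bigraph_def intro: PRBG_if_no_back_pattern)

lemma card_antidiagonals_ge: "k * 2 ^ (k - 1) \<le> card (antidiagonals k)"
proof -
  define f where "f = (\<lambda>(j, u). (u, 2 ^ k - 1 - 2 ^ j - u :: nat))"
  define D where "D = {..<k} \<times> {..<(2::nat) ^ (k - 1)}"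
  have room: "u + 2 ^ j < 2 ^ k" if "(j, u) \<in> D" for j u
    using that pow2_add_pow2_le[of j k "k - 1"] by (auto simp: D_def)
  have "f ` D \<subseteq> antidiagonals k"
  proof
    fix x
    assume "x \<in> f ` D"
    then obtain j u where "(j, u) \<in> D" "x = f (j, u)"
      by auto
    then show "x \<in> antidiagonals k"
      using room[of j u] unfolding antidiagonals_def f_def by (auto intro!: exI[of _ j])
  qed
  moreover have "inj_on f D"
  proof (rule inj_onI, clarify)
    fix j u j' u'
    assume D: "(j, u) \<in> D" "(j', u') \<in> D" and "f (j, u) = f (j', u')"
    then have "u = u'" "2 ^ k - 1 - 2 ^ j - u = 2 ^ k - 1 - 2 ^ j' - u'"
      by (auto simp: f_def)
    then have "(2::nat) ^ j = 2 ^ j'"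
      using room[OF D(1)] room[OF D(2)] by linarith
    with \<open>u = u'\<close> show "j = j' \<and> u = u'"
      by simp
  qed
  moreover have "finite (antidiagonals k)"
    using antidiagonals_subset by (rule finite_subset) simp
  ultimately have "card D \<le> card (antidiagonals k)"
    by (meson card_inj_on_le)
  then show ?thesis
    by (simp add: D_def)
qed

lemma exists_large_PRBG:
  "\<exists>n \<ge> N. \<exists>U V E. PRBG U V E \<and> card U + card V = n \<and>
     1 / 8 * real n * log 2 (real n) \<le> real (card E)"
proof (intro exI conjI)
  define k where "k = N + 1"
  show "PRBG {..<2 ^ k} {..<2 ^ k} (antidiagonals k)"
    by (rule PRBG_antidiagonals)
  show "card {..<(2::nat) ^ k} + card {..<(2::nat) ^ k} = 2 ^ (N + 2)"
    by (simp add: k_def)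
  show "N \<le> 2 ^ (N + 2)"
    by (metis less_exp add_lessD1 less_imp_le)
  have "log 2 (real (2 ^ (N + 2))) = real (N + 2)"
    by (simp only: of_nat_power of_nat_numeral log_pow_cancel[of 2] zero_less_numeral)
  then have "1 / 8 * real (2 ^ (N + 2)) * log 2 (real (2 ^ (N + 2))) = (real N + 2) * 2 ^ N / 2"
    by (simp add: power_add)
  also have "\<dots> \<le> real ((N + 1) * 2 ^ N)"
    by (simp add: field_simps)
  also have "\<dots> \<le> real (card (antidiagonals k))"
    using card_antidiagonals_ge[of k] unfolding of_nat_le_iff by (simp add: k_def)
  finally show "1 / 8 * real (2 ^ (N + 2)) * log 2 (real (2 ^ (N + 2))) \<le>
      real (card (antidiagonals k))" .
qed

theorem theorem1:
  shows "(\<exists>C::real. \<forall>U V E. PRBG U V E \<longrightarrow>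
            real (card E) \<le> real (card U + card V) * log 2 (real (card U + card V))
                             + C * real (card U + card V))
       \<and> (\<exists>c::real. c > 0 \<and> (\<forall>N::nat. \<exists>n\<ge>N. \<exists>U V E. PRBG U V E \<and> card U + card V = n \<and>
            real (card E) \<ge> c * real n * log 2 (real n)))"
  using PRBG_card_le exists_large_PRBG by (intro conjI exI[of _ 2] exI[of _ "1 / 8"]) auto

end
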